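(* Fix a source $i$ with observation window (stopping set) $W$, and let $D_{ij}=\Vert X_i-y_j\Vert^\alpha/(\theta r^\alpha)$. Consider the problem of minimizing over $\eta\in[0,1]$ the conditional network average AoI under slotted ALOHA, \[ J(\eta)=\mathbb{E}\Big[\frac{1}{\eta\,\mu_i^\Phi}\,\Big\vert\, W\Big]=\frac{\exp\Big(\frac{\theta r^\alpha}{\rho}+\lambda\int_{\mathbb{R}^2\setminus W}\frac{\eta\,\mathrm{d}x}{1-\eta+\Vert x\Vert^\alpha/(\theta r^\alpha)}\Big)}{\eta\prod_{j\neq i,\, y_j\in W}\big(1-\frac{\eta}{1+D_{ij}}\big)}. \] If \[ \sum_{y_j \in W,\, j \neq i} \frac{1}{D_{ij}} + \lambda \int_{\mathbb{R}^2 \setminus W} \Big(\frac{\theta r^\alpha}{\Vert x \Vert^\alpha} + \frac{\theta^2 r^{2\alpha}}{\Vert x \Vert^{2\alpha}} \Big)\mathrm{d}x > 1, \] then the optimal update rate of source $i$ is the solution $\eta$ of the fixed-point equation \[ \frac{1}{\eta} - \sum_{y_j \in W,\, j \neq i} \frac{1}{1 + D_{ij} - \eta} - \int_{\mathbb{R}^2 \setminus W} \frac{\lambda(1 + \Vert x \Vert^\alpha/(\theta r^\alpha))\, \mathrm{d}x}{(1 - \eta + \Vert x \Vert^\alpha/(\theta r^\alpha))^2}=0; \] otherwise the optimal update rate is $\eta=1$.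
   Context: Sources form a homogeneous Poisson point process $\{X_i\}$ of intensity $\lambda$ on $\mathbb{R}^2$, each with a destination $y_i$ at fixed distance $r$ in a uniformly random direction. Under slotted ALOHA, each source $i$ transmits in each slot independently with probability $\eta_i=\eta(W(S_{X_i}(\Phi)))\in[0,1]$, a function of its local observation $W$ (a stopping set, i.e. a random Borel set whose occurrence inside a set $\mathcal H$ is determined by the points in $\mathcal H$; in practice a disk around the source), where $S_x$ shifts coordinates to put $x$ at the origin. Transmit power $P_{\mathrm{tx}}$, noise variance $\sigma^2$, $\rho=P_{\mathrm{tx}}/\sigma^2$, unit-mean Rayleigh fading, path-loss exponent $\alpha>2$, decoding threshold $\theta$. $\mu_i^\Phi$ denotes the conditional probability (given the point process) that the SINR of link $i$ exceeds $\theta$; the expression for $J(\eta)$ is the paper's evaluation of $\mathbb{E}[1/(\eta\mu_i^\Phi)\mid W]$, with distances $\Vert x\Vert$ measured in coordinates centered at the node of link $i$. *)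

theory Defs
  imports "HOL-Analysis.Analysis"
begin

text \<open>Coordinates are centred at the source X_i of link i, so X_i = 0 and
  the plane is real^2 with Lebesgue measure lborel.\<close>

definition Dval :: "real \<Rightarrow> real \<Rightarrow> real \<Rightarrow> real^2 \<Rightarrow> real" where
  "Dval theta r alpha y = norm y powr alpha / (theta * r powr alpha)"

text \<open>The conditional average AoI J(eta) of the paper (as a closed formula).
  Jset indexes the destinations y_j (j different from i) lying in W.\<close>
definition aoi_J ::
  "real \<Rightarrow> real \<Rightarrow> real \<Rightarrow> real \<Rightarrow> real \<Rightarrow> (real^2) set \<Rightarrow> nat set \<Rightarrow> (nat \<Rightarrow> real^2) \<Rightarrow> real \<Rightarrow> real" where
  "aoi_J lam theta r alpha rho W Jset y eta =
     exp (theta * r powr alpha / rho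
          + lam * (LINT x:(- W)|lborel. eta / (1 - eta + norm x powr alpha / (theta * r powr alpha))))
     / (eta * (\<Prod>j\<in>Jset. 1 - eta / (1 + Dval theta r alpha (y j))))"

definition aoi_cond ::
  "real \<Rightarrow> real \<Rightarrow> real \<Rightarrow> real \<Rightarrow> (real^2) set \<Rightarrow> nat set \<Rightarrow> (nat \<Rightarrow> real^2) \<Rightarrow> real" where
  "aoi_cond lam theta r alpha W Jset y =
     (\<Sum>j\<in>Jset. 1 / Dval theta r alpha (y j))
     + lam * (LINT x:(- W)|lborel. theta * r powr alpha / norm x powr alpha
                                   + (theta * r powr alpha)^2 / (norm x powr alpha)^2)"

definition aoi_F ::
  "real \<Rightarrow> real \<Rightarrow> real \<Rightarrow> real \<Rightarrow> (real^2) set \<Rightarrow> nat set \<Rightarrow> (nat \<Rightarrow> real^2) \<Rightarrow> real \<Rightarrow> real" where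
  "aoi_F lam theta r alpha W Jset y eta =
     1 / eta - (\<Sum>j\<in>Jset. 1 / (1 + Dval theta r alpha (y j) - eta))
     - (LINT x:(- W)|lborel. lam * (1 + norm x powr alpha / (theta * r powr alpha))
                           / (1 - eta + norm x powr alpha / (theta * r powr alpha))^2)"

text \<open>eta is an optimal update rate: it minimises J over the admissible rates
  (0,1]; at eta = 0 the paper's J is +infinity.\<close>
definition optimal_rate :: "(real \<Rightarrow> real) \<Rightarrow> real \<Rightarrow> bool" where
  "optimal_rate J eta \<longleftrightarrow> eta \<in> {0<..1} \<and> (\<forall>eta'\<in>{0<..1}. J eta \<le> J eta')"

end

theory Submission
  imports Defs
begin

text \<open>Up to a constant, ln J(eta) is the sum of -ln eta, of the terms -ln (1 - eta / (1 + D_ij)),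
  and of lam times the integral over the complement of W of eta / (1 - eta + D(x)). Each is convex
  in eta, the first strictly, and their derivatives add up to -F(eta); the integrals converge because
  alpha > 2 makes norm x powr -alpha integrable away from the origin. Hence ln J lies strictly
  above its tangent lines, and a rate eta0 with F(eta0) (eta - eta0) <= 0 for all eta in (0,1] is
  the unique minimiser. Finally F(eta) >= 1/eta - C, with C the left-hand side of the threshold
  condition, and F(1) = 1 - C; so if C > 1 the continuous F has a root, which is the minimiser,
  and otherwise F(1) >= 0 and the minimiser is eta = 1.\<close>

lemma ex_power_two_bracket:
  fixes t :: real assumes "1 \<le> t"
  shows "\<exists>k::nat. 2 ^ k \<le> t \<and> t < 2 ^ Suc k"
proof -
  define k where "k = nat \<lfloor>log 2 t\<rfloor>"
  have "0 \<le> log 2 t" using assms by simp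
  then have "\<lfloor>log 2 t\<rfloor> = int k" unfolding k_def by simp
  then have "2 powr real k \<le> t \<and> t < 2 powr (real k + 1)"
    using assms floor_log_eq_powr_iff[of t 2 "int k"] by simp
  then show ?thesis by (auto simp: powr_realpow[symmetric] powr_add)
qed

text \<open>On the dyadic shell \<open>eps 2^k \<le> norm x < eps 2^(k+1)\<close> the integrand is at most
  \<open>(eps 2^k) powr -p\<close> and the shell has volume \<open>O((eps 2^k)^n)\<close>, so the integral is
  bounded by a geometric series with ratio \<open>2 powr (n - p) < 1\<close>.\<close>
lemma set_integrable_norm_powr_outside_ball:
  fixes eps p :: real
  assumes eps: "eps > 0" and p: "p > DIM('a)"
  shows "set_integrable lborel {x::'a::euclidean_space. eps \<le> norm x} (\<lambda>x. norm x powr (-p))"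
  unfolding set_integrable_def
proof (rule integrableI_nonneg)
  let ?n = "DIM('a)"
  let ?f = "\<lambda>x::'a. indicator {x. eps \<le> norm x} x *\<^sub>R norm x powr (-p)"
  define A where "A k = {x::'a. eps * 2 ^ k \<le> norm x \<and> norm x < eps * 2 ^ Suc k}" for k :: nat
  define c where "c k = (eps * 2 ^ k) powr (-p)" for k :: nat
  define M where "M = emeasure lebesgue (ball (0::'a) 1)"
  define q where "q = (2::real) powr (?n - p)"
  have q: "0 < q" "q < 1" unfolding q_def using p by (auto intro: powr_less_one)
  have A_sets [measurable]: "A k \<in> sets lborel" for k unfolding A_def by measurable
  show "?f \<in> borel_measurable lborel" by measurable
  show "AE x in lborel. 0 \<le> ?f x" by auto
  have f_le: "ennreal (?f x) \<le> (\<Sum>k. ennreal (c k) * indicator (A k) x)" for x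
  proof (cases "eps \<le> norm x")
    case True
    then obtain k :: nat where k: "2 ^ k \<le> norm x / eps" "norm x / eps < 2 ^ Suc k"
      using ex_power_two_bracket[of "norm x / eps"] eps by auto
    have xA: "x \<in> A k" unfolding A_def using k eps by (simp add: field_simps)
    have "norm x powr (-p) \<le> c k" unfolding c_def
      using k eps p by (intro powr_mono2') (auto simp: field_simps)
    then have "ennreal (?f x) \<le> ennreal (c k) * indicator (A k) x"
      using True xA by (auto intro: ennreal_leI)
    also have "\<dots> \<le> (\<Sum>k. ennreal (c k) * indicator (A k) x)"
      using sum_le_suminf[OF summableI, of "{k}" "\<lambda>k. ennreal (c k) * indicator (A k) x"]
      by (simp del: sum_mult_indicator)
    finally show ?thesis .
  qed simp
  have ck: "c k * (eps * 2 ^ Suc k) ^ ?n = 2 ^ ?n * eps powr (?n - p) * q ^ k" for k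
    unfolding c_def q_def using eps
    by (simp add: powr_mult powr_diff powr_realpow[symmetric] powr_powr power_mult_distrib
        powr_minus field_simps)
  have "(\<integral>\<^sup>+ x. ennreal (?f x) \<partial>lborel) \<le> (\<integral>\<^sup>+ x. (\<Sum>k. ennreal (c k) * indicator (A k) x) \<partial>lborel)"
    by (rule nn_integral_mono) (rule f_le)
  also have "\<dots> = (\<Sum>k. \<integral>\<^sup>+ x. ennreal (c k) * indicator (A k) x \<partial>lborel)"
    by (intro nn_integral_suminf) measurable
  also have "\<dots> = (\<Sum>k. ennreal (c k) * emeasure lborel (A k))"
    using A_sets by (intro suminf_cong nn_integral_cmult_indicator) simp
  also have "\<dots> \<le> (\<Sum>k. ennreal (c k) * (ennreal ((eps * 2 ^ Suc k) ^ ?n) * M))"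
  proof (intro suminf_le summableI mult_left_mono)
    fix k
    have "emeasure lborel (A k) \<le> emeasure lborel (ball (0::'a) (eps * 2 ^ Suc k))"
      by (intro emeasure_mono) (auto simp: A_def)
    also have "\<dots> = ennreal ((eps * 2 ^ Suc k) ^ ?n) * M"
      unfolding M_def using eps emeasure_lebesgue_ball_conv_unit_ball[of "eps * 2 ^ Suc k" 0]
      by (simp add: emeasure_completion)
    finally show "emeasure lborel (A k) \<le> ennreal ((eps * 2 ^ Suc k) ^ ?n) * M" .
  qed auto
  also have "\<dots> = (\<Sum>k. ennreal (2 ^ ?n * eps powr (?n - p) * q ^ k)) * M"
    unfolding ck[symmetric] using eps
    by (simp add: c_def ennreal_mult mult.assoc flip: ennreal_suminf_multc)
  also have "\<dots> = ennreal (\<Sum>k. 2 ^ ?n * eps powr (?n - p) * q ^ k) * M"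
    using q by (subst suminf_ennreal2) (auto intro!: summable_mult summable_geometric)
  also have "\<dots> < \<infinity>"
    unfolding M_def using emeasure_lborel_ball_finite[of "0::'a" 1]
    by (simp add: emeasure_completion ennreal_mult_less_top)
  finally show "(\<integral>\<^sup>+ x. ennreal (?f x) \<partial>lborel) < \<infinity>" .
qed

lemma optimal_rate_unique:
  fixes J F :: "real \<Rightarrow> real"
  assumes J_pos: "\<And>e. e \<in> {0<..1} \<Longrightarrow> 0 < J e"
    and supporting_line:
      "\<And>e e'. e \<in> {0<..1} \<Longrightarrow> e' \<in> {0<..1} \<Longrightarrow> e \<noteq> e' \<Longrightarrow> ln (J e) - F e * (e' - e) < ln (J e')"
    and e0: "e0 \<in> {0<..1}"
    and stationary: "\<And>e. e \<in> {0<..1} \<Longrightarrow> F e0 * (e - e0) \<le> 0"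
  shows "{e. optimal_rate J e} = {e0}"
proof -
  have less: "J e0 < J e" if e: "e \<in> {0<..1}" "e \<noteq> e0" for e
  proof -
    have "ln (J e0) < ln (J e)"
      using supporting_line[OF e0 e(1) e(2)[symmetric]] stationary[OF e(1)] by linarith
    then show ?thesis using J_pos e0 e(1) by simp
  qed
  show ?thesis
  proof (intro set_eqI iffI)
    fix e assume "e \<in> {e. optimal_rate J e}"
    then have "e \<in> {0<..1}" "J e \<le> J e0"
      using e0 unfolding optimal_rate_def by auto
    then show "e \<in> {e0}" using less[of e] by force
  next
    fix e assume "e \<in> {e0}"
    moreover have "J e0 \<le> J e'" if "e' \<in> {0<..1}" for e'
      using less[OF that] by (cases "e' = e0") auto
    ultimately show "e \<in> {e. optimal_rate J e}"
      using e0 unfolding optimal_rate_def by auto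
  qed
qed

lemma optimal_rate_threshold:
  fixes J F :: "real \<Rightarrow> real" and C :: real
  assumes J_pos: "\<And>e. e \<in> {0<..1} \<Longrightarrow> 0 < J e"
    and supporting_line:
      "\<And>e e'. e \<in> {0<..1} \<Longrightarrow> e' \<in> {0<..1} \<Longrightarrow> e \<noteq> e' \<Longrightarrow> ln (J e) - F e * (e' - e) < ln (J e')"
    and F_one: "F 1 = 1 - C"
    and F_lower_bound: "\<And>e. e \<in> {0<..1} \<Longrightarrow> 1 / e - C \<le> F e"
    and F_cont: "continuous_on {0<..1} F"
  shows "(C > 1 \<longrightarrow> {e. optimal_rate J e} = {e \<in> {0<..1}. F e = 0})
       \<and> (\<not> C > 1 \<longrightarrow> {e. optimal_rate J e} = {1})"
proof -
  have unique: "{e. optimal_rate J e} = {e0}"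
    if "e0 \<in> {0<..1}" "\<And>e. e \<in> {0<..1} \<Longrightarrow> F e0 * (e - e0) \<le> 0" for e0
    using optimal_rate_unique[OF J_pos supporting_line that] by blast
  show ?thesis
  proof (intro conjI impI)
    assume "C > 1"
    define a where "a = 1 / (C + 1)"
    have a: "0 < a" "a \<le> 1" "1 / a = C + 1"
      using \<open>C > 1\<close> unfolding a_def by (simp_all add: field_simps)
    have "0 \<le> F a" using F_lower_bound[of a] a by simp
    moreover have "F 1 \<le> 0" using F_one \<open>C > 1\<close> by simp
    moreover have "continuous_on {a..1} F"
      by (rule continuous_on_subset[OF F_cont]) (use a in auto)
    ultimately obtain e0 where "a \<le> e0" "e0 \<le> 1" "F e0 = 0"
      using IVT2'[of F 1 0 a] a by auto
    then have e0: "e0 \<in> {0<..1}" "F e0 = 0" using a by auto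
    have roots: "{e. optimal_rate J e} = {e}" if "e \<in> {0<..1}" "F e = 0" for e
      using unique[OF that(1)] that(2) by simp
    then have root_unique: "e = e0" if "e \<in> {0<..1}" "F e = 0" for e
      using roots[OF that] roots[OF e0] by simp
    show "{e. optimal_rate J e} = {e \<in> {0<..1}. F e = 0}"
      unfolding roots[OF e0] using e0 root_unique by blast
  next
    assume "\<not> C > 1"
    then have "F 1 * (e - 1) \<le> 0" if "e \<in> {0<..1}" for e
      using F_one that by (intro mult_nonneg_nonpos) auto
    then show "{e. optimal_rate J e} = {1}"
      by (intro unique) auto
  qed
qed

lemma frac_supporting_line:
  fixes a e e' :: real
  assumes "0 \<le> a" "e < a" "e' < a"
  shows "e / (a - e) + a / (a - e)^2 * (e' - e) \<le> e' / (a - e')"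
proof -
  have "e' / (a - e') - (e / (a - e) + a / (a - e)^2 * (e' - e))
      = a * (e' - e)^2 / ((a - e)^2 * (a - e'))"
    using assms by (simp add: divide_simps) algebra
  also have "\<dots> \<ge> 0" using assms by simp
  finally show ?thesis by simp
qed

lemma ln_one_minus_divide_supporting_line:
  fixes b e e' :: real
  assumes "0 < b" "e < b" "e' < b"
  shows "ln (1 - e' / b) \<le> ln (1 - e / b) - (e' - e) / (b - e)"
proof -
  have "1 - x / b = (b - x) / b" for x using assms(1) by (simp add: field_simps)
  then have "ln (1 - e' / b) - ln (1 - e / b) = ln (b - e') - ln (b - e)"
    using assms by (simp add: ln_div)
  also have "\<dots> \<le> ((b - e') - (b - e)) / (b - e)"
    using assms by (intro ln_diff_le) auto
  finally show ?thesis by (simp add: diff_divide_distrib)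
qed

lemma continuous_on_set_integral_dominated:
  fixes f :: "'b::metric_space \<Rightarrow> 'a \<Rightarrow> real"
  assumes g: "set_integrable M A g"
    and f_meas: "\<And>t. t \<in> T \<Longrightarrow> set_borel_measurable M A (f t)"
    and f_cont: "\<And>x. x \<in> A \<Longrightarrow> continuous_on T (\<lambda>t. f t x)"
    and f_bound: "\<And>t x. t \<in> T \<Longrightarrow> x \<in> A \<Longrightarrow> \<bar>f t x\<bar> \<le> g x"
  shows "continuous_on T (\<lambda>t. LINT x:A|M. f t x)"
proof (rule continuous_on_sequentiallyI)
  fix u :: "nat \<Rightarrow> 'b" and t0 assume u: "\<forall>n. u n \<in> T" and t0: "t0 \<in> T" and lim: "u \<longlonglongrightarrow> t0"
  show "(\<lambda>n. LINT x:A|M. f (u n) x) \<longlonglongrightarrow> (LINT x:A|M. f t0 x)"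
    unfolding set_lebesgue_integral_def
  proof (rule integral_dominated_convergence)
    show "integrable M (\<lambda>x. indicator A x *\<^sub>R g x)"
      using g unfolding set_integrable_def .
    show "(\<lambda>x. indicator A x *\<^sub>R f t0 x) \<in> borel_measurable M"
      using f_meas[OF t0] unfolding set_borel_measurable_def .
    show "(\<lambda>x. indicator A x *\<^sub>R f (u n) x) \<in> borel_measurable M" for n
      using f_meas u unfolding set_borel_measurable_def by blast
    show "AE x in M. (\<lambda>n. indicator A x *\<^sub>R f (u n) x) \<longlonglongrightarrow> indicator A x *\<^sub>R f t0 x"
    proof (intro AE_I2)
      fix x
      show "(\<lambda>n. indicator A x *\<^sub>R f (u n) x) \<longlonglongrightarrow> indicator A x *\<^sub>R f t0 x"
      proof (cases "x \<in> A")
        case True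
        then show ?thesis
          using continuous_on_sequentially[THEN iffD1, OF f_cont[OF True], rule_format, OF t0] u lim
          by (simp add: comp_def)
      qed simp
    qed
    show "AE x in M. norm (indicator A x *\<^sub>R f (u n) x) \<le> indicator A x *\<^sub>R g x" for n
      using f_bound u by (intro AE_I2) (simp split: split_indicator)
  qed
qed

locale exterior_interference =
  fixes theta r alpha eps :: real and W :: "(real^2) set"
  assumes theta_pos: "0 < theta" and r_pos: "0 < r" and alpha_gt_2: "2 < alpha"
    and W_sets: "W \<in> sets lborel" and eps_pos: "0 < eps" and ball_subset_W: "ball 0 eps \<subseteq> W"
begin

abbreviation D :: "real^2 \<Rightarrow> real" where "D \<equiv> Dval theta r alpha"

definition phi :: "real \<Rightarrow> real^2 \<Rightarrow> real" where
  "phi e x = e / (1 - e + D x)"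

definition phi' :: "real \<Rightarrow> real^2 \<Rightarrow> real" where
  "phi' e x = (1 + D x) / (1 - e + D x)^2"

text \<open>\<open>lam * Phi \<eta>\<close> is the interference term in the exponent of \<open>J \<eta>\<close>;
  \<open>Phi'\<close> is its derivative in \<open>\<eta>\<close>, as \<open>phi'\<close> is that of \<open>phi\<close>.\<close>

definition Phi :: "real \<Rightarrow> real" where
  "Phi e = (LINT x:-W|lborel. phi e x)"

definition Phi' :: "real \<Rightarrow> real" where
  "Phi' e = (LINT x:-W|lborel. phi' e x)"

lemma Dval_pos: "x \<noteq> 0 \<Longrightarrow> 0 < D x"
  using theta_pos r_pos unfolding Dval_def by simp

lemma eps_le_norm_outside: "x \<notin> W \<Longrightarrow> eps \<le> norm x"
  using ball_subset_W by (force simp: dist_norm)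

lemma Dval_pos_outside:
  assumes "x \<notin> W"
  shows "0 < D x"
proof (rule Dval_pos)
  show "x \<noteq> 0" using eps_le_norm_outside[OF assms] eps_pos by auto
qed

lemma phi'_one_eq:
  assumes "x \<notin> W"
  shows "phi' 1 x = theta * r powr alpha / norm x powr alpha
                    + (theta * r powr alpha)^2 / (norm x powr alpha)^2"
proof -
  have "0 < norm x" using eps_le_norm_outside[OF assms] eps_pos by linarith
  moreover have "0 < theta * r powr alpha" using theta_pos r_pos by simp
  ultimately show ?thesis
    unfolding phi'_def Dval_def by (simp add: field_simps power2_eq_square)
qed

lemma set_integrable_phi'_one: "set_integrable lborel (-W) (phi' 1)"
proof -
  let ?c = "theta * r powr alpha"
  have powr: "set_integrable lborel (-W) (\<lambda>x. norm x powr (-p))" if "2 < p" for p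
  proof (rule set_integrable_subset)
    show "set_integrable lborel {x::real^2. eps \<le> norm x} (\<lambda>x. norm x powr (-p))"
      using that by (intro set_integrable_norm_powr_outside_ball eps_pos) simp
    show "-W \<in> sets lborel" using W_sets by simp
    show "-W \<subseteq> {x. eps \<le> norm x}" using eps_le_norm_outside by auto
  qed
  have "set_integrable lborel (-W) (\<lambda>x. ?c * norm x powr (-alpha) + ?c^2 * norm x powr (-(2*alpha)))"
    using powr[of alpha] powr[of "2*alpha"] alpha_gt_2 by auto
  then show ?thesis
  proof (subst set_integrable_cong[OF refl refl])
    fix x :: "real^2" assume "x \<in> -W"
    then have "phi' 1 x = ?c / norm x powr alpha + ?c^2 / (norm x powr alpha)^2"
      by (simp add: phi'_one_eq)
    moreover have "norm x powr (2*alpha) = (norm x powr alpha)^2"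
      by (simp add: power2_eq_square powr_add[symmetric])
    ultimately show "phi' 1 x = ?c * norm x powr (-alpha) + ?c^2 * norm x powr (-(2*alpha))"
      unfolding powr_minus_divide by simp
  qed
qed

lemma phi'_mono:
  assumes "x \<notin> W" "e \<le> e'" "e' \<le> 1"
  shows "phi' e x \<le> phi' e' x"
  using Dval_pos_outside[OF assms(1)] assms(2,3) unfolding phi'_def
  by (intro divide_left_mono power_mono mult_pos_pos) auto

lemma phi'_nonneg: "x \<notin> W \<Longrightarrow> 0 \<le> phi' e x"
  using Dval_pos_outside[of x] unfolding phi'_def by simp

lemma abs_phi_le:
  assumes "x \<notin> W" "0 \<le> e" "e \<le> 1"
  shows "\<bar>phi e x\<bar> \<le> phi' 1 x"
proof -
  have D: "0 < D x" using Dval_pos_outside[OF assms(1)] .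
  have "phi e x \<le> 1 / D x"
    unfolding phi_def using D assms(2,3) by (intro frac_le) auto
  also have "\<dots> \<le> phi' 1 x"
    unfolding phi'_def using D by (simp add: field_simps power2_eq_square)
  finally show ?thesis using D assms(2,3) unfolding phi_def by simp
qed

lemma set_borel_measurable_phi: "set_borel_measurable lborel (-W) (phi e)"
  unfolding set_borel_measurable_def phi_def Dval_def using W_sets by measurable

lemma set_borel_measurable_phi': "set_borel_measurable lborel (-W) (phi' e)"
  unfolding set_borel_measurable_def phi'_def Dval_def using W_sets by measurable

lemma set_integrable_phi:
  assumes "0 \<le> e" "e \<le> 1"
  shows "set_integrable lborel (-W) (phi e)"
  using abs_phi_le assms phi'_nonneg
  by (intro set_integrable_bound[OF set_integrable_phi'_one set_borel_measurable_phi] AE_I2) auto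

lemma set_integrable_phi':
  assumes "e \<le> 1"
  shows "set_integrable lborel (-W) (phi' e)"
  using phi'_mono assms phi'_nonneg
  by (intro set_integrable_bound[OF set_integrable_phi'_one set_borel_measurable_phi'] AE_I2) auto

lemma Phi_supporting_line:
  assumes "0 \<le> e" "e \<le> 1" "0 \<le> e'" "e' \<le> 1"
  shows "Phi e + Phi' e * (e' - e) \<le> Phi e'"
proof -
  have "Phi e + Phi' e * (e' - e) = (LINT x:-W|lborel. phi e x + phi' e x * (e' - e))"
    unfolding Phi_def Phi'_def
    using set_integrable_phi[OF assms(1,2)] set_integrable_phi'[OF assms(2)] by simp
  also have "\<dots> \<le> Phi e'"
    unfolding Phi_def
  proof (intro set_integral_mono set_integral_add set_integrable_phi)
    fix x assume "x \<in> -W"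
    then show "phi e x + phi' e x * (e' - e) \<le> phi e' x"
      using frac_supporting_line[of "1 + D x" e e'] Dval_pos_outside[of x] assms
      unfolding phi_def phi'_def by (simp add: algebra_simps)
  qed (use assms set_integrable_phi' in auto)
  finally show ?thesis .
qed

lemma Phi'_mono:
  assumes "e \<le> e'" "e' \<le> 1"
  shows "Phi' e \<le> Phi' e'"
  unfolding Phi'_def using assms phi'_mono
  by (intro set_integral_mono set_integrable_phi') auto

lemma continuous_on_Phi': "continuous_on {..1} Phi'"
  unfolding Phi'_def
proof (rule continuous_on_set_integral_dominated[OF set_integrable_phi'_one set_borel_measurable_phi'])
  fix x assume "x \<in> -W"
  then have D: "0 < D x" using Dval_pos_outside by simp
  show "continuous_on {..1} (\<lambda>e. phi' e x)"
    unfolding phi'_def using D by (intro continuous_intros) (auto simp: add_pos_nonneg)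
  show "\<bar>phi' e x\<bar> \<le> phi' 1 x" if "e \<in> {..1}" for e
    using phi'_mono phi'_nonneg \<open>x \<in> -W\<close> that by simp
qed

end

locale aoi_network = exterior_interference +
  fixes lam rho :: real and Jset :: "nat set" and y :: "nat \<Rightarrow> real^2"
  assumes lam_nonneg: "0 \<le> lam" and finite_Jset: "finite Jset"
    and y_nonzero: "\<And>j. j \<in> Jset \<Longrightarrow> y j \<noteq> 0"
begin

abbreviation J :: "real \<Rightarrow> real" where "J \<equiv> aoi_J lam theta r alpha rho W Jset y"
abbreviation F :: "real \<Rightarrow> real" where "F \<equiv> aoi_F lam theta r alpha W Jset y"
abbreviation C :: real where "C \<equiv> aoi_cond lam theta r alpha W Jset y"

lemma less_one_plus_Dval:
  assumes "j \<in> Jset" "e \<le> 1"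
  shows "e < 1 + D (y j)"
  using Dval_pos[OF y_nonzero[OF assms(1)]] assms(2) by simp

lemma one_minus_divide_pos:
  assumes "j \<in> Jset" "e \<le> 1"
  shows "0 < 1 - e / (1 + D (y j))"
proof -
  have "0 < 1 + D (y j)" using Dval_pos[OF y_nonzero[OF assms(1)]] by simp
  then show ?thesis using less_one_plus_Dval[OF assms] by (simp add: field_simps)
qed

lemma J_eq:
  "J e = exp (theta * r powr alpha / rho + lam * Phi e)
         / (e * (\<Prod>j\<in>Jset. 1 - e / (1 + D (y j))))"
  unfolding aoi_J_def Phi_def phi_def Dval_def ..

lemma J_pos: "e \<in> {0<..1} \<Longrightarrow> 0 < J e"
  unfolding J_eq using one_minus_divide_pos finite_Jset
  by (intro divide_pos_pos mult_pos_pos prod_pos) auto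

lemma ln_J_eq:
  assumes "e \<in> {0<..1}"
  shows "ln (J e) = theta * r powr alpha / rho + lam * Phi e - ln e
                    - (\<Sum>j\<in>Jset. ln (1 - e / (1 + D (y j))))"
proof -
  have pos: "0 < 1 - e / (1 + D (y j))" if "j \<in> Jset" for j
    using one_minus_divide_pos that assms by simp
  have "0 < (\<Prod>j\<in>Jset. 1 - e / (1 + D (y j)))"
    using pos by (rule prod_pos)
  then have "ln (J e) = theta * r powr alpha / rho + lam * Phi e
                   - (ln e + ln (\<Prod>j\<in>Jset. 1 - e / (1 + D (y j))))"
    unfolding J_eq using assms by (simp add: ln_div ln_mult)
  also have "ln (\<Prod>j\<in>Jset. 1 - e / (1 + D (y j))) = (\<Sum>j\<in>Jset. ln (1 - e / (1 + D (y j))))"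
    using finite_Jset pos by (intro ln_prod) force+
  finally show ?thesis by simp
qed

lemma F_eq: "F e = 1 / e - (\<Sum>j\<in>Jset. 1 / (1 + D (y j) - e)) - lam * Phi' e"
proof -
  have "F e = 1 / e - (\<Sum>j\<in>Jset. 1 / (1 + D (y j) - e)) - (LINT x:-W|lborel. lam * phi' e x)"
    unfolding aoi_F_def phi'_def Dval_def by (simp only: times_divide_eq_right)
  then show ?thesis unfolding Phi'_def by simp
qed

lemma C_eq: "C = (\<Sum>j\<in>Jset. 1 / D (y j)) + lam * Phi' 1"
proof -
  have "Phi' 1 = (LINT x:-W|lborel. theta * r powr alpha / norm x powr alpha
                                   + (theta * r powr alpha)^2 / (norm x powr alpha)^2)"
    unfolding Phi'_def using W_sets phi'_one_eq by (intro set_lebesgue_integral_cong) auto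
  then show ?thesis unfolding aoi_cond_def by simp
qed

lemma ln_J_supporting_line:
  assumes e: "e \<in> {0<..1}" and e': "e' \<in> {0<..1}" and "e \<noteq> e'"
  shows "ln (J e) - F e * (e' - e) < ln (J e')"
proof -
  define S where "S = (\<Sum>j\<in>Jset. 1 / (1 + D (y j) - e))"
  have "lam * (Phi e + Phi' e * (e' - e)) \<le> lam * Phi e'"
    using Phi_supporting_line[of e e'] e e' lam_nonneg by (intro mult_left_mono) auto
  moreover have "ln e' - ln e < (e' - e) / e"
    using ln_diff_less[of e' e] e e' \<open>e \<noteq> e'\<close> by simp
  moreover have "(\<Sum>j\<in>Jset. ln (1 - e' / (1 + D (y j))))
      \<le> (\<Sum>j\<in>Jset. ln (1 - e / (1 + D (y j))) - (e' - e) / (1 + D (y j) - e))"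
    using less_one_plus_Dval e e'
    by (intro sum_mono ln_one_minus_divide_supporting_line) (auto intro: add_pos_nonneg)
  then have "(\<Sum>j\<in>Jset. ln (1 - e' / (1 + D (y j))))
      \<le> (\<Sum>j\<in>Jset. ln (1 - e / (1 + D (y j)))) - (e' - e) * S"
    unfolding S_def by (simp add: sum_subtractf sum_distrib_left)
  moreover have "F e * (e' - e) = (e' - e) / e - (e' - e) * S - lam * (Phi' e * (e' - e))"
    unfolding F_eq S_def by (simp add: algebra_simps)
  ultimately show ?thesis
    unfolding ln_J_eq[OF e] ln_J_eq[OF e'] by (simp add: algebra_simps)
qed

lemma F_one: "F 1 = 1 - C"
  unfolding F_eq C_eq by simp

lemma F_lower_bound:
  assumes e: "e \<in> {0<..1}"
  shows "1 / e - C \<le> F e"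
proof -
  have "(\<Sum>j\<in>Jset. 1 / (1 + D (y j) - e)) \<le> (\<Sum>j\<in>Jset. 1 / D (y j))"
    using less_one_plus_Dval Dval_pos[OF y_nonzero] e
    by (intro sum_mono divide_left_mono mult_pos_pos) auto
  moreover have "lam * Phi' e \<le> lam * Phi' 1"
    using Phi'_mono[of e 1] e lam_nonneg by (intro mult_left_mono) auto
  ultimately show ?thesis
    unfolding F_eq C_eq by linarith
qed

lemma continuous_on_F: "continuous_on {0<..1} F"
proof -
  have "continuous_on {0<..1} Phi'"
    using continuous_on_Phi' by (rule continuous_on_subset) auto
  then have "continuous_on {0<..1} (\<lambda>e. 1 / e - (\<Sum>j\<in>Jset. 1 / (1 + D (y j) - e)) - lam * Phi' e)"
    using Dval_pos[OF y_nonzero] by (intro continuous_intros) fastforce+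
  then show ?thesis unfolding F_eq .
qed

end

theorem theorem1:
  fixes lam theta r alpha rho eps :: real
    and W :: "(real^2) set" and Jset :: "nat set" and y :: "nat \<Rightarrow> real^2"
  assumes "lam > 0" and "theta > 0" and "r > 0" and "rho > 0" and "alpha > 2"
    and "W \<in> sets lborel" and "eps > 0" and "ball 0 eps \<subseteq> W"
    and "finite Jset" and "\<forall>j\<in>Jset. y j \<in> W \<and> y j \<noteq> 0"
  shows "(aoi_cond lam theta r alpha W Jset y > 1 \<longrightarrow>
            {eta. optimal_rate (aoi_J lam theta r alpha rho W Jset y) eta}
            = {eta \<in> {0<..1}. aoi_F lam theta r alpha W Jset y eta = 0})
       \<and> (\<not> aoi_cond lam theta r alpha W Jset y > 1 \<longrightarrow>
            {eta. optimal_rate (aoi_J lam theta r alpha rho W Jset y) eta} = {1})"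
proof -
  interpret aoi_network theta r alpha eps W lam rho Jset y
    using assms by unfold_locales auto
  show ?thesis
    using optimal_rate_threshold[OF J_pos ln_J_supporting_line F_one F_lower_bound continuous_on_F]
    by blast
qed

end
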